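(* Let $F$ and $V=(v_{pq})$ be $n\times n$ real matrices and let $i\in\{1,\dots,n\}$. Suppose that $V_{[i,i]}$ is nonsingular. Consider $v_{ii}\to\infty$ with $F$ and all other entries of $V$ held fixed (so that $V$ is invertible for all sufficiently large $v_{ii}$). Then \[ \lim_{v_{ii}\to\infty}\rho(FV^{-1})=\rho\big(F_{[i,i]}(V_{[i,i]})^{-1}\big). \]
   Context: For a matrix $M$, $M_{[j,k]}$ denotes the matrix obtained from $M$ by deleting its $j$th row and $k$th column; $v_{pq}$ denotes the $(p,q)$ entry of $V$. $\rho(M)$ denotes the spectral radius of a square matrix $M$, i.e. the maximum modulus of its eigenvalues. *)

theory Defs
  imports "Jordan_Normal_Form.Spectral_Radius" "Jordan_Normal_Form.Gauss_Jordan_Elimination"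
    "Jordan_Normal_Form.Determinant"
begin

definition rho :: "real mat \<Rightarrow> real" where
  "rho A = (if dim_row A = 0 then 0 else spectral_radius (map_mat complex_of_real A))"

text \<open>Matrix inverse (meaningful for invertible square matrices).\<close>
definition minv :: "real mat \<Rightarrow> real mat" where
  "minv A = the (mat_inverse A)"

definition set_diag :: "real mat \<Rightarrow> nat \<Rightarrow> real \<Rightarrow> real mat" where
  "set_diag V i t = mat (dim_row V) (dim_col V) (\<lambda>(p,q). if p = i \<and> q = i then t else V $$ (p,q))"

end

theory Submission
  imports Defs
begin

text \<open>Write \<open>V\<^sub>t\<close> for \<open>V\<close> with its \<open>(i,i)\<close> entry replaced by \<open>t\<close>. By Laplace expansion,
  \<open>det V\<^sub>t\<close> and all cofactors of \<open>V\<^sub>t\<close> are affine in \<open>t\<close>; the slope of \<open>det V\<^sub>t\<close> is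
  \<open>det V\<^bsub>[i,i]\<^esub> \<noteq> 0\<close>, and cofactors obtained by deleting row or column \<open>i\<close> do not depend on \<open>t\<close>.
  So \<open>V\<^sub>t\<^sup>-\<^sup>1 = adj V\<^sub>t / det V\<^sub>t\<close> converges entrywise to a matrix \<open>W\<close> whose \<open>i\<close>-th row and
  column vanish. The columns of \<open>V\<^sub>t\<close> other than the \<open>i\<close>-th do not depend on \<open>t\<close>, hence \<open>W V\<close>
  agrees with the identity outside column \<open>i\<close>, and deleting row and column \<open>i\<close> of \<open>W\<close> leaves
  \<open>V\<^bsub>[i,i]\<^esub>\<^sup>-\<^sup>1\<close>. The \<open>i\<close>-th column of \<open>F W\<close> vanishes, so its characteristic polynomial is
  \<open>x\<close> times that of \<open>(F W)\<^bsub>[i,i]\<^esub> = F\<^bsub>[i,i]\<^esub> V\<^bsub>[i,i]\<^esub>\<^sup>-\<^sup>1\<close> and the spectral radii agree.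

  The spectral radius is continuous in the entries: the determinant is Lipschitz on
  bounded sets, so an eigenvalue \<open>z\<close> of \<open>X\<close> makes \<open>\<chi>\<^sub>Y(z) = \<Prod>(z - a)\<close> small for \<open>Y\<close> near \<open>X\<close>,
  and then some eigenvalue \<open>a\<close> of \<open>Y\<close> is within the \<open>n\<close>-th root of that bound from \<open>z\<close>.\<close>

section \<open>Continuity of the spectral radius\<close>

lemma norm_prod_diff_le:
  fixes x y :: "'i \<Rightarrow> 'a :: real_normed_field"
  assumes "finite S" "K \<ge> 1" "e \<ge> 0"
    and "\<And>k. k \<in> S \<Longrightarrow> norm (x k) \<le> K \<and> norm (y k) \<le> K \<and> norm (x k - y k) \<le> e"
  shows "norm (prod x S - prod y S) \<le> real (card S) * K ^ card S * e"
  using assms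
proof (induction S rule: finite_induct)
  case empty
  then show ?case by simp
next
  case (insert a S)
  have IH: "norm (prod x S - prod y S) \<le> real (card S) * K ^ card S * e"
    using insert by auto
  have xa: "norm (x a) \<le> K" "norm (x a - y a) \<le> e" using insert.prems by auto
  have "norm (prod y S) \<le> (\<Prod>k\<in>S. K)"
    unfolding prod_norm[symmetric] using insert.prems by (intro prod_mono) auto
  then have yS: "norm (prod y S) \<le> K ^ card S" by simp
  have "prod x (insert a S) - prod y (insert a S) = x a * (prod x S - prod y S) + (x a - y a) * prod y S"
    using insert by (simp add: algebra_simps)
  then have "norm (prod x (insert a S) - prod y (insert a S))
      \<le> norm (x a) * norm (prod x S - prod y S) + norm (x a - y a) * norm (prod y S)"
    by (metis norm_mult norm_triangle_ineq)
  also have "\<dots> \<le> K * (real (card S) * K ^ card S * e) + e * K ^ card S"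
    using insert.prems by (intro add_mono mult_mono xa IH yS) auto
  also have "\<dots> \<le> K * (real (card S) * K ^ card S * e) + e * K ^ Suc (card S)"
    using insert.prems by (intro add_left_mono mult_left_mono power_increasing) auto
  also have "\<dots> = real (card (insert a S)) * K ^ card (insert a S) * e"
    using insert by (simp add: algebra_simps)
  finally show ?case .
qed

lemma norm_det_diff_le:
  fixes X Y :: "'a :: real_normed_field mat"
  assumes X: "X \<in> carrier_mat n n" and Y: "Y \<in> carrier_mat n n" and "K \<ge> 1" "e \<ge> 0"
    and bounds: "\<And>p q. p < n \<Longrightarrow> q < n \<Longrightarrow>
      norm (X $$ (p,q)) \<le> K \<and> norm (Y $$ (p,q)) \<le> K \<and> norm (X $$ (p,q) - Y $$ (p,q)) \<le> e"
  shows "norm (det X - det Y) \<le> fact n * (real n * K ^ n * e)"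
proof -
  let ?P = "{p. p permutes {0..<n}}"
  let ?d = "\<lambda>p. (\<Prod>k = 0..<n. X $$ (k, p k)) - (\<Prod>k = 0..<n. Y $$ (k, p k))"
  have "det X - det Y = (\<Sum>p\<in>?P. signof p * ?d p)"
    unfolding det_def'[OF X] det_def'[OF Y] right_diff_distrib sum_subtractf ..
  then have "norm (det X - det Y) \<le> (\<Sum>p\<in>?P. norm (signof p * ?d p :: 'a))"
    by (simp only: norm_sum)
  also have "\<dots> \<le> (\<Sum>p\<in>?P. real n * K ^ n * e)"
  proof (rule sum_mono)
    fix p assume "p \<in> ?P"
    then have "norm (?d p) \<le> real (card {0..<n}) * K ^ card {0..<n} * e"
      using assms by (intro norm_prod_diff_le) (auto simp: permutes_in_image)
    then show "norm (signof p * ?d p :: 'a) \<le> real n * K ^ n * e"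
      by (simp add: norm_mult sign_def)
  qed
  also have "\<dots> = fact n * (real n * K ^ n * e)"
    using card_permutations[of "{0..<n}" n] by simp
  finally show ?thesis .
qed

lemma eigenvalue_norm_le:
  fixes X :: "'a :: real_normed_field mat"
  assumes X: "X \<in> carrier_mat n n" and "eigenvalue X z"
    and bound: "\<And>p q. p < n \<Longrightarrow> q < n \<Longrightarrow> norm (X $$ (p,q)) \<le> M"
  shows "norm z \<le> real n * M"
proof -
  obtain v where v: "v \<in> carrier_vec n" "v \<noteq> 0\<^sub>v n" "X *\<^sub>v v = z \<cdot>\<^sub>v v"
    using assms(2) X unfolding eigenvalue_def eigenvector_def by auto
  have "n \<noteq> 0"
  proof
    assume "n = 0"
    with v(1) have "v = 0\<^sub>v n"
      by (intro eq_vecI) auto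
    with v(2) show False ..
  qed
  then have "Max ((\<lambda>j. norm (v $ j)) ` {..<n}) \<in> (\<lambda>j. norm (v $ j)) ` {..<n}"
    by (intro Max_in) auto
  then obtain k where k: "k < n" "Max ((\<lambda>j. norm (v $ j)) ` {..<n}) = norm (v $ k)"
    by auto
  have vk: "norm (v $ j) \<le> norm (v $ k)" if "j < n" for j
    unfolding k(2)[symmetric] using that by (intro Max_ge) auto
  have "v $ k \<noteq> 0"
  proof
    assume "v $ k = 0"
    with v(1) vk have "v = 0\<^sub>v n"
      by (intro eq_vecI) auto
    with v(2) show False ..
  qed
  have "norm z * norm (v $ k) = norm (\<Sum>j = 0..<n. X $$ (k,j) * v $ j)"
    using arg_cong[OF v(3), of "\<lambda>w. w $ k"] X v(1) k(1) by (simp add: scalar_prod_def norm_mult)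
  also have "\<dots> \<le> (\<Sum>j = 0..<n. norm (X $$ (k,j)) * norm (v $ j))"
    unfolding norm_mult[symmetric] by (rule norm_sum)
  also have "\<dots> \<le> (\<Sum>j = 0..<n. M * norm (v $ k))"
    using bound[OF k(1)] vk by (intro sum_mono mult_mono) (auto intro: order.trans[OF norm_ge_zero])
  also have "\<dots> = real n * M * norm (v $ k)"
    by simp
  finally show ?thesis
    using \<open>v $ k \<noteq> 0\<close> by simp
qed

lemma norm_prod_list_gt:
  fixes as :: "'a :: real_normed_field list"
  assumes "as \<noteq> []" "\<And>a. a \<in> set as \<Longrightarrow> norm (z - a) > r" "r \<ge> 0"
  shows "norm (\<Prod>a\<leftarrow>as. z - a) > r ^ length as"
  using assms
proof (induction as)
  case Nil
  then show ?case by simp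
next
  case (Cons a as)
  show ?case
  proof (cases "as = []")
    case True
    with Cons.prems show ?thesis by simp
  next
    case False
    have ra: "r < norm (z - a)"
      using Cons.prems(2) by simp
    have IH: "r ^ length as < norm (\<Prod>a\<leftarrow>as. z - a)"
      using Cons False by simp
    have "r * r ^ length as < norm (z - a) * norm (\<Prod>a\<leftarrow>as. z - a)"
      using Cons.prems(3) ra by (intro mult_strict_mono[OF ra IH]) auto
    then show ?thesis
      by (simp add: norm_mult)
  qed
qed

lemma ex_factor_norm_le_root:
  fixes as :: "'a :: real_normed_field list"
  assumes "as \<noteq> []" and "norm (\<Prod>a\<leftarrow>as. z - a) \<le> \<delta>"
  shows "\<exists>a\<in>set as. norm (z - a) \<le> root (length as) \<delta>"
proof (rule ccontr)
  assume "\<not> ?thesis"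
  moreover have "\<delta> \<ge> 0"
    using assms(2) norm_ge_zero order.trans by blast
  ultimately have "norm (\<Prod>a\<leftarrow>as. z - a) > root (length as) \<delta> ^ length as"
    using assms(1) by (intro norm_prod_list_gt) auto
  also have "root (length as) \<delta> ^ length as = \<delta>"
    using assms(1) \<open>\<delta> \<ge> 0\<close> by simp
  finally show False
    using assms(2) by simp
qed

lemma norm_poly_char_poly_diff_le:
  fixes X Y :: "'a :: real_normed_field mat"
  assumes X: "X \<in> carrier_mat n n" and Y: "Y \<in> carrier_mat n n"
    and "M \<ge> 0" "e \<ge> 0" "1 + norm z + M \<le> K"
    and bounds: "\<And>p q. p < n \<Longrightarrow> q < n \<Longrightarrow>
      norm (X $$ (p,q)) \<le> M \<and> norm (Y $$ (p,q)) \<le> M \<and> norm (X $$ (p,q) - Y $$ (p,q)) \<le> e"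
  shows "norm (poly (char_poly X) z - poly (char_poly Y) z) \<le> fact n * (real n * K ^ n * e)"
proof -
  have "K \<ge> 1"
    using assms(3,5) norm_ge_zero[of z] by linarith
  have char_entry: "(- char_matrix W z) $$ (p,q) = (if p = q then z else 0) - W $$ (p,q)"
    if "W \<in> carrier_mat n n" "p < n" "q < n" for W p q
    using that by (simp add: char_matrix_def)
  have "norm (det (- char_matrix X z) - det (- char_matrix Y z)) \<le> fact n * (real n * K ^ n * e)"
  proof (rule norm_det_diff_le)
    fix p q assume pq: "p < n" "q < n"
    define d where "d = (if p = q then z else 0)"
    have "norm d \<le> norm z"
      by (simp add: d_def)
    moreover note norm_triangle_ineq4[of d "X $$ (p,q)"] norm_triangle_ineq4[of d "Y $$ (p,q)"]
    moreover have "norm ((d - X $$ (p,q)) - (d - Y $$ (p,q))) = norm (X $$ (p,q) - Y $$ (p,q))"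
      by (simp add: norm_minus_commute)
    ultimately show "norm ((- char_matrix X z) $$ (p,q)) \<le> K \<and> norm ((- char_matrix Y z) $$ (p,q)) \<le> K
      \<and> norm ((- char_matrix X z) $$ (p,q) - (- char_matrix Y z) $$ (p,q)) \<le> e"
      unfolding char_entry[OF X pq] char_entry[OF Y pq] d_def[symmetric]
      using bounds[OF pq] \<open>1 + norm z + M \<le> K\<close> by linarith
  qed (use X Y assms(3-4) \<open>K \<ge> 1\<close> in auto)
  then show ?thesis
    using char_poly_matrix[OF X] char_poly_matrix[OF Y] by simp
qed

lemma ex_spectrum_near_if_char_poly_small:
  fixes Y :: "complex mat"
  assumes Y: "Y \<in> carrier_mat n n" and "n > 0" and "norm (poly (char_poly Y) z) \<le> \<delta>"
  shows "\<exists>a \<in> spectrum Y. norm (z - a) \<le> root n \<delta>"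
proof -
  obtain as where as: "char_poly Y = (\<Prod>a\<leftarrow>as. [:- a, 1:])" "length as = n"
    using char_poly_factorized[OF Y] by auto
  have poly_Y: "poly (char_poly Y) w = (\<Prod>a\<leftarrow>as. w - a)" for w
    unfolding as(1) poly_prod_list by (simp add: o_def)
  obtain a where a: "a \<in> set as" "norm (z - a) \<le> root n \<delta>"
    using ex_factor_norm_le_root[of as z] assms(2,3) as(2) unfolding poly_Y by auto
  then have "poly (char_poly Y) a = 0"
    unfolding poly_Y by (induction as) auto
  with a(2) show ?thesis
    using spectrum_root_char_poly[OF Y] by auto
qed

lemma spectral_radius_le_perturbed:
  fixes X Y :: "complex mat"
  assumes X: "X \<in> carrier_mat n n" and Y: "Y \<in> carrier_mat n n" and "n > 0" "M \<ge> 0" "e \<ge> 0"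
    and bounds: "\<And>p q. p < n \<Longrightarrow> q < n \<Longrightarrow>
      norm (X $$ (p,q)) \<le> M \<and> norm (Y $$ (p,q)) \<le> M \<and> norm (X $$ (p,q) - Y $$ (p,q)) \<le> e"
  shows "spectral_radius X \<le> spectral_radius Y + root n (fact n * (real n * (1 + real n * M + M) ^ n * e))"
proof -
  obtain z where z: "z \<in> spectrum X" "norm z = spectral_radius X"
    using spectral_radius_mem_max(1)[OF X \<open>n > 0\<close>] by auto
  then have "eigenvalue X z"
    unfolding spectrum_def by simp
  then have "norm z \<le> real n * M" and "poly (char_poly X) z = 0"
    using eigenvalue_norm_le[OF X] bounds eigenvalue_root_char_poly[OF X] by auto
  define \<delta> where "\<delta> = fact n * (real n * (1 + real n * M + M) ^ n * e)"
  have "norm (poly (char_poly X) z - poly (char_poly Y) z) \<le> \<delta>"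
    unfolding \<delta>_def by (rule norm_poly_char_poly_diff_le[OF X Y \<open>M \<ge> 0\<close> \<open>e \<ge> 0\<close> _ bounds])
      (use \<open>norm z \<le> real n * M\<close> in simp)
  with \<open>poly (char_poly X) z = 0\<close> have "norm (poly (char_poly Y) z) \<le> \<delta>"
    by (simp add: norm_minus_commute)
  then obtain a where "a \<in> spectrum Y" "norm (z - a) \<le> root n \<delta>"
    using ex_spectrum_near_if_char_poly_small[OF Y \<open>n > 0\<close>] by blast
  moreover have "norm z \<le> norm a + norm (z - a)"
    by (metis norm_triangle_sub add.commute)
  ultimately show ?thesis
    using z(2) spectral_radius_mem_max(2)[OF Y \<open>n > 0\<close>] unfolding \<delta>_def by fastforce
qed

section \<open>Entrywise limits of matrices\<close>

definition mat_tendsto :: "('b \<Rightarrow> 'a :: topological_space mat) \<Rightarrow> 'a mat \<Rightarrow> 'b filter \<Rightarrow> bool" where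
  "mat_tendsto f A F \<longleftrightarrow> (\<forall>\<^sub>F t in F. f t \<in> carrier_mat (dim_row A) (dim_col A)) \<and>
     (\<forall>p < dim_row A. \<forall>q < dim_col A. ((\<lambda>t. f t $$ (p,q)) \<longlongrightarrow> A $$ (p,q)) F)"

lemma mat_tendsto_const: "mat_tendsto (\<lambda>_. A) A F"
  unfolding mat_tendsto_def by auto

lemma mat_tendsto_mult:
  fixes f g :: "'b \<Rightarrow> 'a :: real_normed_algebra mat"
  assumes f: "mat_tendsto f A F" and g: "mat_tendsto g B F" and AB: "dim_col A = dim_row B"
  shows "mat_tendsto (\<lambda>t. f t * g t) (A * B) F"
proof -
  have dims: "\<forall>\<^sub>F t in F. f t \<in> carrier_mat (dim_row A) (dim_col A) \<and> g t \<in> carrier_mat (dim_row B) (dim_col B)"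
    using f g unfolding mat_tendsto_def by (auto intro: eventually_conj)
  have "((\<lambda>t. (f t * g t) $$ (p,q)) \<longlongrightarrow> (A * B) $$ (p,q)) F"
    if "p < dim_row A" "q < dim_col B" for p q
  proof -
    have "((\<lambda>t. \<Sum>r<dim_col A. f t $$ (p,r) * g t $$ (r,q)) \<longlongrightarrow> (\<Sum>r<dim_col A. A $$ (p,r) * B $$ (r,q))) F"
      using f g that AB unfolding mat_tendsto_def by (intro tendsto_sum tendsto_mult) auto
    moreover have "\<forall>\<^sub>F t in F. (\<Sum>r<dim_col A. f t $$ (p,r) * g t $$ (r,q)) = (f t * g t) $$ (p,q)"
      using dims by eventually_elim
        (use that AB in \<open>auto simp: scalar_prod_def lessThan_atLeast0 intro!: sum.cong\<close>)
    ultimately show ?thesis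
      using that AB by (simp add: scalar_prod_def lessThan_atLeast0 Lim_transform_eventually)
  qed
  moreover have "\<forall>\<^sub>F t in F. f t * g t \<in> carrier_mat (dim_row (A * B)) (dim_col (A * B))"
    using dims by eventually_elim auto
  ultimately show ?thesis
    unfolding mat_tendsto_def by auto
qed

lemma mat_tendsto_map_of_real:
  assumes lim: "mat_tendsto f A F"
  shows "mat_tendsto (\<lambda>t. map_mat (of_real :: real \<Rightarrow> 'a :: real_normed_algebra_1) (f t)) (map_mat of_real A) F"
proof -
  have "((\<lambda>t. map_mat of_real (f t) $$ (p,q)) \<longlongrightarrow> (of_real (A $$ (p,q)) :: 'a)) F"
    if "p < dim_row A" "q < dim_col A" for p q
  proof -
    have "\<forall>\<^sub>F t in F. of_real (f t $$ (p,q)) = (map_mat of_real (f t) $$ (p,q) :: 'a)"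
      using lim that unfolding mat_tendsto_def by (auto elim!: eventually_mono)
    moreover have "((\<lambda>t. of_real (f t $$ (p,q))) \<longlongrightarrow> (of_real (A $$ (p,q)) :: 'a)) F"
      using lim that unfolding mat_tendsto_def by (auto intro: tendsto_of_real)
    ultimately show ?thesis
      by (rule Lim_transform_eventually[rotated])
  qed
  with lim show ?thesis
    unfolding mat_tendsto_def by (auto elim!: eventually_mono)
qed

lemma tendsto_spectral_radius:
  assumes lim: "mat_tendsto f A F" and A: "A \<in> carrier_mat n n" and "n > 0"
  shows "((\<lambda>t. spectral_radius (f t)) \<longlongrightarrow> spectral_radius A) F"
proof -
  have entry_le: "norm (h p q) \<le> (\<Sum>p<n. \<Sum>q<n. norm (h p q))"
    if "p < n" "q < n" for h :: "nat \<Rightarrow> nat \<Rightarrow> complex" and p q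
    using that by (intro order.trans[OF _ member_le_sum[of p]] member_le_sum) (auto intro: sum_nonneg)
  have "\<forall>\<^sub>F t in F. f t \<in> carrier_mat n n"
    using lim A unfolding mat_tendsto_def by simp
  define e where "e t = (\<Sum>p<n. \<Sum>q<n. norm (f t $$ (p,q) - A $$ (p,q)))" for t
  define M where "M = 1 + (\<Sum>p<n. \<Sum>q<n. norm (A $$ (p,q)))"
  define g where "g t = root n (fact n * (real n * (1 + real n * M + M) ^ n * e t))" for t
  have "M \<ge> 0"
    unfolding M_def by (auto intro!: add_nonneg_nonneg sum_nonneg)
  have "e t \<ge> 0" for t
    unfolding e_def by (auto intro!: sum_nonneg)
  have "(e \<longlongrightarrow> (\<Sum>p<n. \<Sum>q<n. norm (0 :: complex))) F"
    unfolding e_def using lim A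
    by (intro tendsto_sum tendsto_norm) (auto simp: mat_tendsto_def intro: LIM_zero)
  then have "(e \<longlongrightarrow> 0) F"
    by simp
  have "\<forall>\<^sub>F t in F. e t < 1"
    using \<open>(e \<longlongrightarrow> 0) F\<close> by (rule order_tendstoD) simp
  have "(g \<longlongrightarrow> 0) F"
    using \<open>(e \<longlongrightarrow> 0) F\<close> tendsto_real_root[of _ 0] unfolding g_def by (auto intro!: tendsto_eq_intros)
  moreover have "\<forall>\<^sub>F t in F. dist (spectral_radius (f t)) (spectral_radius A) \<le> dist (g t) 0"
    using \<open>\<forall>\<^sub>F t in F. f t \<in> carrier_mat n n\<close> \<open>\<forall>\<^sub>F t in F. e t < 1\<close>
  proof eventually_elim
    case (elim t)
    have bounds: "norm (f t $$ (p,q)) \<le> M \<and> norm (A $$ (p,q)) \<le> M \<and> norm (f t $$ (p,q) - A $$ (p,q)) \<le> e t"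
      if "p < n" "q < n" for p q
      using entry_le[OF that, of "\<lambda>p q. f t $$ (p,q) - A $$ (p,q)"]
        entry_le[OF that, of "\<lambda>p q. A $$ (p,q)"] norm_triangle_sub[of "f t $$ (p,q)" "A $$ (p,q)"] elim(2)
      unfolding e_def M_def by linarith
    have "spectral_radius (f t) \<le> spectral_radius A + g t"
      using elim A bounds unfolding g_def
      by (intro spectral_radius_le_perturbed[of _ n] \<open>n > 0\<close> \<open>M \<ge> 0\<close> \<open>e t \<ge> 0\<close>) auto
    moreover have "spectral_radius A \<le> spectral_radius (f t) + g t"
      using elim A bounds unfolding g_def
      by (intro spectral_radius_le_perturbed[of _ n] \<open>n > 0\<close> \<open>M \<ge> 0\<close> \<open>e t \<ge> 0\<close>)
        (auto simp: norm_minus_commute)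
    ultimately show ?case
      by (simp add: dist_real_def)
  qed
  ultimately show ?thesis
    by (rule metric_tendsto_imp_tendsto)
qed

lemma tendsto_rho:
  assumes lim: "mat_tendsto f A F" and A: "A \<in> carrier_mat n n"
  shows "((\<lambda>t. rho (f t)) \<longlongrightarrow> rho A) F"
proof (cases "n = 0")
  case True
  have "\<forall>\<^sub>F t in F. rho (f t) = rho A"
    using lim A True unfolding mat_tendsto_def rho_def by (auto elim!: eventually_mono)
  then show ?thesis
    by (simp add: tendsto_eventually)
next
  case False
  have "rho A = spectral_radius (map_mat complex_of_real A)"
    using A False by (simp add: rho_def)
  then have "((\<lambda>t. spectral_radius (map_mat complex_of_real (f t))) \<longlongrightarrow> rho A) F"
    using A False by (auto intro!: tendsto_spectral_radius[of _ _ _ n] mat_tendsto_map_of_real lim)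
  moreover have "\<forall>\<^sub>F t in F. spectral_radius (map_mat complex_of_real (f t)) = rho (f t)"
    using lim A False unfolding mat_tendsto_def rho_def by (auto elim!: eventually_mono)
  ultimately show ?thesis
    by (rule Lim_transform_eventually)
qed

section \<open>Deleting a row and a column\<close>

lemma index_mat_delete:
  assumes "p < dim_row A - 1" "q < dim_col A - 1"
  shows "mat_delete A r s $$ (p,q) = A $$ (insert_index r p, insert_index s q)"
  using assms unfolding mat_delete_def insert_index_def by simp

lemma sum_lessThan_insert_index:
  assumes "i < Suc m"
  shows "(\<Sum>r<Suc m. f r) = f i + (\<Sum>r<m. f (insert_index i r))"
proof -
  have "(\<Sum>r<Suc m. f r) = f i + (\<Sum>r\<in>{0..<Suc m} - {i}. f r)"
    using assms unfolding lessThan_atLeast0 by (intro sum.remove) auto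
  also have "{0..<Suc m} - {i} = insert_index i ` {0..<m}"
    using insert_index_image[OF assms] by simp
  also have "(\<Sum>r\<in>insert_index i ` {0..<m}. f r) = (\<Sum>r<m. f (insert_index i r))"
    by (subst sum.reindex) (auto intro: insert_index_inj_on simp: lessThan_atLeast0)
  finally show ?thesis .
qed

lemma mat_delete_mult:
  fixes A B :: "'a :: semiring_0 mat"
  assumes A: "A \<in> carrier_mat m n" and B: "B \<in> carrier_mat n k" and "r < m" "s < k" "j < n"
    and vanish: "\<And>p q. p < m \<Longrightarrow> q < k \<Longrightarrow> A $$ (p,j) * B $$ (j,q) = 0"
  shows "mat_delete (A * B) r s = mat_delete A r j * mat_delete B j s"
proof (rule eq_matI)
  fix p q assume "p < dim_row (mat_delete A r j * mat_delete B j s)"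
    "q < dim_col (mat_delete A r j * mat_delete B j s)"
  then have pq: "p < m - 1" "q < k - 1"
    using A B by auto
  then have PQ: "insert_index r p < m" "insert_index s q < k"
    using assms(3,4) by (auto simp: insert_index_def)
  obtain n' where n': "n = Suc n'"
    using \<open>j < n\<close> by (cases n) auto
  have "mat_delete (A * B) r s $$ (p,q) = (\<Sum>l<n. A $$ (insert_index r p, l) * B $$ (l, insert_index s q))"
    using A B pq PQ by (simp add: index_mat_delete scalar_prod_def lessThan_atLeast0)
  also have "\<dots> = (\<Sum>l<n'. A $$ (insert_index r p, insert_index j l) * B $$ (insert_index j l, insert_index s q))"
    using vanish[OF PQ] \<open>j < n\<close> unfolding n' by (subst sum_lessThan_insert_index[of j]) simp_all
  also have "\<dots> = (mat_delete A r j * mat_delete B j s) $$ (p,q)"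
    using A B pq n' by (simp add: index_mat_delete scalar_prod_def lessThan_atLeast0)
  finally show "mat_delete (A * B) r s $$ (p,q) = (mat_delete A r j * mat_delete B j s) $$ (p,q)" .
qed (use A B in auto)

lemma poly_char_poly_zero_col:
  fixes A :: "'a :: field mat"
  assumes A: "A \<in> carrier_mat n n" and i: "i < n" and zero: "\<And>p. p < n \<Longrightarrow> A $$ (p,i) = 0"
  shows "poly (char_poly A) x = x * poly (char_poly (mat_delete A i i)) x"
proof -
  define C where "C = - char_matrix A x"
  have C: "C \<in> carrier_mat n n"
    unfolding C_def using A by simp
  have "det C = (\<Sum>p<n. C $$ (p,i) * cofactor C p i)"
    by (rule laplace_expansion_column[OF C i])
  also have "\<dots> = (\<Sum>p<n. if p = i then x * cofactor C i i else 0)"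
    using A i zero by (intro sum.cong) (auto simp: C_def char_matrix_def)
  also have "\<dots> = x * det (mat_delete C i i)"
    using i by (simp add: cofactor_def flip: mult_2)
  also have "mat_delete C i i = - char_matrix (mat_delete A i i) x"
    using A i unfolding C_def mat_delete_def char_matrix_def by (intro eq_matI) auto
  finally show ?thesis
    using char_poly_matrix[OF A] char_poly_matrix[OF mat_delete_carrier[OF A]] by (simp add: C_def)
qed

lemma spectrum_zero_col:
  fixes A :: "'a :: field mat"
  assumes A: "A \<in> carrier_mat n n" and i: "i < n" and zero: "\<And>p. p < n \<Longrightarrow> A $$ (p,i) = 0"
  shows "spectrum A = insert 0 (spectrum (mat_delete A i i))"
  using spectrum_root_char_poly[OF A] spectrum_root_char_poly[OF mat_delete_carrier[OF A]]
    poly_char_poly_zero_col[OF assms] by auto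

lemma rho_mat_delete_zero_col:
  assumes X: "X \<in> carrier_mat n n" and i: "i < n" and zero: "\<And>p. p < n \<Longrightarrow> X $$ (p,i) = 0"
  shows "rho (mat_delete X i i) = rho X"
proof -
  define C where "C = map_mat complex_of_real X"
  have C: "C \<in> carrier_mat n n" and C': "mat_delete C i i \<in> carrier_mat (n - 1) (n - 1)"
    using X mat_delete_carrier[of C n n] by (auto simp: C_def)
  have "spectrum C = insert 0 (spectrum (mat_delete C i i))"
    using X i zero by (intro spectrum_zero_col[OF C i]) (auto simp: C_def)
  then have rho_X: "rho X = Max (norm ` insert 0 (spectrum (mat_delete C i i)))"
    using X i by (simp add: rho_def spectral_radius_def C_def)
  have del: "mat_delete C i i = map_mat complex_of_real (mat_delete X i i)"
    using X unfolding C_def mat_delete_def by (intro eq_matI) auto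
  show ?thesis
  proof (cases "n = 1")
    case True
    then have "spectrum (mat_delete C i i) = {}"
      using card_finite_spectrum[OF C'] by simp
    then show ?thesis
      using X True rho_X by (simp add: rho_def)
  next
    case False
    let ?S = "norm ` spectrum (mat_delete C i i)"
    have "finite ?S" "?S \<noteq> {}"
      using card_finite_spectrum(1)[OF C'] spectrum_non_empty[OF C'] False i by auto
    then obtain z :: complex where "Max ?S = norm z"
      using Max_in[of ?S] by blast
    then have "0 \<le> Max ?S"
      by simp
    then show ?thesis
      using \<open>finite ?S\<close> \<open>?S \<noteq> {}\<close> X False i rho_X
      by (simp add: rho_def spectral_radius_def del[symmetric])
  qed
qed

section \<open>Inverses as one diagonal entry grows\<close>

lemma mat_delete_update_mat_same_line:
  assumes "p = a \<or> q = b"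
  shows "mat_delete (A |\<^sub>m (a,b) \<mapsto> t) p q = mat_delete A p q"
  using assms unfolding mat_delete_def update_mat_def by (intro eq_matI) auto

lemma mat_delete_update_mat:
  assumes "p \<noteq> a" "q \<noteq> b"
  shows "mat_delete (A |\<^sub>m (a,b) \<mapsto> t) p q = mat_delete A p q |\<^sub>m (delete_index p a, delete_index q b) \<mapsto> t"
proof (rule eq_matI)
  fix r s assume "r < dim_row (mat_delete A p q |\<^sub>m (delete_index p a, delete_index q b) \<mapsto> t)"
    "s < dim_col (mat_delete A p q |\<^sub>m (delete_index p a, delete_index q b) \<mapsto> t)"
  then have rs: "r < dim_row A - 1" "s < dim_col A - 1"
    by auto
  then have "insert_index p r < dim_row A" "insert_index q s < dim_col A"
    by (auto simp: insert_index_def)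
  moreover have "insert_index p r = a \<and> insert_index q s = b \<longleftrightarrow> r = delete_index p a \<and> s = delete_index q b"
    using assms insert_delete_index[of a p] insert_delete_index[of b q] by auto
  ultimately show "mat_delete (A |\<^sub>m (a,b) \<mapsto> t) p q $$ (r,s)
      = (mat_delete A p q |\<^sub>m (delete_index p a, delete_index q b) \<mapsto> t) $$ (r,s)"
    using rs by (simp add: index_mat_delete update_mat_def)
qed auto

lemma det_update_mat:
  fixes A :: "'a :: comm_ring_1 mat"
  assumes A: "A \<in> carrier_mat n n" and "a < n" "b < n"
  shows "det (A |\<^sub>m (a,b) \<mapsto> t) = (\<Sum>j\<in>{..<n} - {b}. A $$ (a,j) * cofactor A a j) + t * cofactor A a b"
proof -
  have "det (A |\<^sub>m (a,b) \<mapsto> t) = (\<Sum>j<n. (A |\<^sub>m (a,b) \<mapsto> t) $$ (a,j) * cofactor (A |\<^sub>m (a,b) \<mapsto> t) a j)"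
    using A \<open>a < n\<close> by (intro laplace_expansion_row) auto
  also have "\<dots> = (\<Sum>j<n. (if j = b then t else A $$ (a,j)) * cofactor A a j)"
    using A \<open>a < n\<close> by (intro sum.cong) (auto simp: cofactor_def mat_delete_update_mat_same_line)
  also have "\<dots> = (\<Sum>j\<in>{..<n} - {b}. A $$ (a,j) * cofactor A a j) + t * cofactor A a b"
    using \<open>b < n\<close> by (subst sum.remove[of _ b]) (auto intro!: sum.cong)
  finally show ?thesis .
qed

lemma cofactor_update_mat_affine:
  fixes A :: "'a :: comm_ring_1 mat"
  assumes A: "A \<in> carrier_mat n n" and "a < n" "b < n" "p < n" "q < n"
  shows "\<exists>c d. (\<forall>t. cofactor (A |\<^sub>m (a,b) \<mapsto> t) p q = d + t * c) \<and> (p = a \<or> q = b \<longrightarrow> c = 0)"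
proof (cases "p = a \<or> q = b")
  case True
  then show ?thesis
    by (intro exI[of _ 0] exI[of _ "cofactor A p q"]) (simp add: cofactor_def mat_delete_update_mat_same_line)
next
  case False
  define D where "D = mat_delete A p q"
  have "D \<in> carrier_mat (n - 1) (n - 1)" "delete_index p a < n - 1" "delete_index q b < n - 1"
    using A False assms(2-5) mat_delete_carrier[OF A]
    by (auto simp: D_def delete_index_def)
  note det_D = det_update_mat[OF this]
  have ne: "p \<noteq> a" "q \<noteq> b"
    using False by auto
  show ?thesis
  proof (intro exI conjI allI)
    fix t :: 'a
    show "cofactor (A |\<^sub>m (a,b) \<mapsto> t) p q = cofactor (A |\<^sub>m (a,b) \<mapsto> 0) p q
        + t * ((-1) ^ (p + q) * cofactor D (delete_index p a) (delete_index q b))"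
      unfolding cofactor_def[of "A |\<^sub>m (a,b) \<mapsto> t"] cofactor_def[of "A |\<^sub>m (a,b) \<mapsto> 0"]
        mat_delete_update_mat[OF ne] D_def[symmetric] det_D
      by (simp add: algebra_simps)
  qed (use ne in simp)
qed

lemma eventually_affine_ne_zero_at_top:
  fixes \<beta> \<delta> :: real
  assumes "\<delta> \<noteq> 0"
  shows "\<forall>\<^sub>F t in at_top. \<beta> + t * \<delta> \<noteq> 0"
  using eventually_gt_at_top[of "\<bar>\<beta>\<bar> / \<bar>\<delta>\<bar>"]
proof eventually_elim
  case (elim t)
  have "0 \<le> \<bar>\<beta>\<bar> / \<bar>\<delta>\<bar>"
    by simp
  with elim have "t > 0"
    by linarith
  with elim have "\<bar>\<beta>\<bar> < \<bar>t * \<delta>\<bar>"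
    using assms by (simp add: divide_less_eq abs_mult)
  then show ?case
    by auto
qed

lemma tendsto_affine_ratio_at_top:
  fixes \<alpha> \<beta> c \<delta> :: real
  assumes "\<delta> \<noteq> 0"
  shows "((\<lambda>t. (\<alpha> + t * c) / (\<beta> + t * \<delta>)) \<longlongrightarrow> c / \<delta>) at_top"
proof -
  have "((\<lambda>t. (c + \<alpha> * inverse t) / (\<delta> + \<beta> * inverse t)) \<longlongrightarrow> (c + \<alpha> * 0) / (\<delta> + \<beta> * 0)) at_top"
    using assms by (intro tendsto_intros tendsto_inverse_0_at_top filterlim_ident) auto
  moreover have "\<forall>\<^sub>F t in at_top. (c + \<alpha> * inverse t) / (\<delta> + \<beta> * inverse t) = (\<alpha> + t * c) / (\<beta> + t * \<delta>)"
    using eventually_gt_at_top[of 0]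
  proof eventually_elim
    case (elim t)
    then have "(c + \<alpha> * inverse t) / (\<delta> + \<beta> * inverse t) = ((c + \<alpha> * inverse t) * t) / ((\<delta> + \<beta> * inverse t) * t)"
      by simp
    also have "\<dots> = (\<alpha> + t * c) / (\<beta> + t * \<delta>)"
      using elim by (simp add: algebra_simps)
    finally show ?case .
  qed
  ultimately show ?thesis
    by (simp add: tendsto_cong)
qed

lemma minv_inverse:
  fixes A :: "real mat"
  assumes A: "A \<in> carrier_mat n n" and "det A \<noteq> 0"
  shows "minv A \<in> carrier_mat n n" "A * minv A = 1\<^sub>m n" "minv A * A = 1\<^sub>m n"
proof -
  have "A \<in> Units (ring_mat TYPE(real) n undefined)"
    by (rule det_non_zero_imp_unit[OF A \<open>det A \<noteq> 0\<close>])
  then obtain B where B: "mat_inverse A = Some B"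
    using mat_inverse(1)[OF A, of undefined] by (cases "mat_inverse A") auto
  then have "minv A = B"
    by (simp add: minv_def)
  with mat_inverse(2)[OF A B] show "minv A \<in> carrier_mat n n" "A * minv A = 1\<^sub>m n" "minv A * A = 1\<^sub>m n"
    by auto
qed

lemma minv_eqI:
  fixes A B :: "real mat"
  assumes A: "A \<in> carrier_mat n n" and B: "B \<in> carrier_mat n n" and "det A \<noteq> 0" and "B * A = 1\<^sub>m n"
  shows "minv A = B"
proof -
  note inv = minv_inverse[OF A \<open>det A \<noteq> 0\<close>]
  have "B = B * (A * minv A)"
    using inv B by simp
  also have "\<dots> = minv A"
    using assoc_mult_mat[OF B A inv(1)] \<open>B * A = 1\<^sub>m n\<close> inv by simp
  finally show ?thesis ..
qed

lemma index_minv: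
  fixes A :: "real mat"
  assumes A: "A \<in> carrier_mat n n" and "det A \<noteq> 0" and "p < n" "q < n"
  shows "minv A $$ (p,q) = cofactor A q p / det A"
proof -
  note inv = minv_inverse[OF A \<open>det A \<noteq> 0\<close>]
  have "adj_mat A = (adj_mat A * A) * minv A"
    using assoc_mult_mat[OF adj_mat(1)[OF A] A inv(1)] inv adj_mat(1)[OF A] by simp
  also have "\<dots> = det A \<cdot>\<^sub>m minv A"
    using adj_mat(3)[OF A] inv mult_smult_assoc_mat[of "1\<^sub>m n" n n "minv A" n "det A"] by simp
  finally have "cofactor A q p = det A * minv A $$ (p,q)"
    using A inv \<open>p < n\<close> \<open>q < n\<close> by (metis adj_mat_def carrier_matD index_mat(1) index_smult_mat(1) case_prod_conv)
  then show ?thesis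
    using \<open>det A \<noteq> 0\<close> by simp
qed

lemma det_update_diag:
  fixes V :: "'a :: comm_ring_1 mat"
  assumes V: "V \<in> carrier_mat n n" and i: "i < n"
  shows "\<exists>\<beta>. \<forall>t. det (V |\<^sub>m (i,i) \<mapsto> t) = \<beta> + t * det (mat_delete V i i)"
  using det_update_mat[OF V i i] by (simp add: cofactor_def flip: mult_2)

lemma eventually_det_update_diag_ne_zero:
  fixes V :: "real mat"
  assumes V: "V \<in> carrier_mat n n" and i: "i < n" and D: "det (mat_delete V i i) \<noteq> 0"
  shows "\<forall>\<^sub>F t in at_top. det (V |\<^sub>m (i,i) \<mapsto> t) \<noteq> 0"
proof -
  obtain \<beta> where "\<And>t. det (V |\<^sub>m (i,i) \<mapsto> t) = \<beta> + t * det (mat_delete V i i)"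
    using det_update_diag[OF V i] by blast
  then show ?thesis
    using eventually_affine_ne_zero_at_top[OF D, of \<beta>] by simp
qed

lemma tendsto_index_minv_update_diag:
  fixes V :: "real mat"
  assumes V: "V \<in> carrier_mat n n" and i: "i < n" and D: "det (mat_delete V i i) \<noteq> 0"
    and pq: "p < n" "q < n"
  shows "\<exists>w. ((\<lambda>t. minv (V |\<^sub>m (i,i) \<mapsto> t) $$ (p,q)) \<longlongrightarrow> w) at_top \<and> (p = i \<or> q = i \<longrightarrow> w = 0)"
proof -
  define Vt where "Vt t = V |\<^sub>m (i,i) \<mapsto> t" for t
  have Vt: "Vt t \<in> carrier_mat n n" for t
    using V by (auto simp: Vt_def)
  obtain c d where cof: "\<And>t. cofactor (Vt t) q p = d + t * c" and "q = i \<or> p = i \<longrightarrow> c = 0"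
    using cofactor_update_mat_affine[OF V i i pq(2,1)] unfolding Vt_def by blast
  obtain \<beta> where det_Vt: "\<And>t. det (Vt t) = \<beta> + t * det (mat_delete V i i)"
    using det_update_diag[OF V i] unfolding Vt_def by blast
  have "\<forall>\<^sub>F t in at_top. (d + t * c) / (\<beta> + t * det (mat_delete V i i)) = minv (Vt t) $$ (p,q)"
    using eventually_det_update_diag_ne_zero[OF V i D] unfolding Vt_def[symmetric]
    by eventually_elim (simp add: index_minv[OF Vt _ pq] cof det_Vt)
  moreover have "((\<lambda>t. (d + t * c) / (\<beta> + t * det (mat_delete V i i))) \<longlongrightarrow> c / det (mat_delete V i i)) at_top"
    using D by (rule tendsto_affine_ratio_at_top)
  ultimately show ?thesis
    using \<open>q = i \<or> p = i \<longrightarrow> c = 0\<close> unfolding Vt_def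
    by (intro exI[of _ "c / det (mat_delete V i i)"]) (auto intro: Lim_transform_eventually)
qed

lemma mat_delete_lim_minv_update_diag:
  fixes V :: "real mat"
  assumes V: "V \<in> carrier_mat n n" and i: "i < n" and D: "det (mat_delete V i i) \<noteq> 0"
    and lim: "mat_tendsto (\<lambda>t. minv (V |\<^sub>m (i,i) \<mapsto> t)) W at_top" and W: "W \<in> carrier_mat n n"
    and W_col: "\<And>p. p < n \<Longrightarrow> W $$ (p,i) = 0"
  shows "mat_delete W i i = minv (mat_delete V i i)"
proof -
  have WV: "(W * V) $$ (p,q) = 1\<^sub>m n $$ (p,q)" if pq: "p < n" "q < n" "q \<noteq> i" for p q
  proof -
    have "((\<lambda>t. (minv (V |\<^sub>m (i,i) \<mapsto> t) * V) $$ (p,q)) \<longlongrightarrow> (W * V) $$ (p,q)) at_top"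
      using mat_tendsto_mult[OF lim mat_tendsto_const[of V]] W V pq unfolding mat_tendsto_def by auto
    moreover have "\<forall>\<^sub>F t in at_top. (minv (V |\<^sub>m (i,i) \<mapsto> t) * V) $$ (p,q) = 1\<^sub>m n $$ (p,q)"
      using eventually_det_update_diag_ne_zero[OF V i D]
    proof eventually_elim
      case (elim t)
      have Vt: "V |\<^sub>m (i,i) \<mapsto> t \<in> carrier_mat n n"
        using V by auto
      note inv_t = minv_inverse[OF Vt elim]
      have "col (V |\<^sub>m (i,i) \<mapsto> t) q = col V q"
        using V pq by (intro eq_vecI) auto
      then have "(minv (V |\<^sub>m (i,i) \<mapsto> t) * V) $$ (p,q) = (minv (V |\<^sub>m (i,i) \<mapsto> t) * (V |\<^sub>m (i,i) \<mapsto> t)) $$ (p,q)"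
        using V Vt inv_t(1) pq by simp
      then show ?case
        using inv_t by simp
    qed
    ultimately show ?thesis
      using tendsto_unique[OF trivial_limit_at_top_linorder] tendsto_eventually by metis
  qed
  have "mat_delete W i i * mat_delete V i i = mat_delete (W * V) i i"
    using W_col by (intro mat_delete_mult[OF W V i i i, symmetric]) auto
  also have "\<dots> = 1\<^sub>m (n - 1)"
  proof (rule eq_matI)
    fix p q assume "p < dim_row (1\<^sub>m (n - 1))" "q < dim_col (1\<^sub>m (n - 1))"
    then have pq: "p < n - 1" "q < n - 1"
      by auto
    then have "insert_index i p < n" "insert_index i q < n" "insert_index i q \<noteq> i"
      by (auto simp: insert_index_def)
    moreover have "insert_index i p = insert_index i q \<longleftrightarrow> p = q"
      by (metis delete_insert_index)
    ultimately show "mat_delete (W * V) i i $$ (p,q) = 1\<^sub>m (n - 1) $$ (p,q)"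
      using W V pq WV[of "insert_index i p" "insert_index i q"] by (simp add: index_mat_delete)
  qed (use W V in auto)
  finally show ?thesis
    using mat_delete_carrier[OF W] mat_delete_carrier[OF V] D by (intro minv_eqI[symmetric]) auto
qed

lemma tendsto_minv_update_diag:
  fixes V :: "real mat"
  assumes V: "V \<in> carrier_mat n n" and i: "i < n" and D: "det (mat_delete V i i) \<noteq> 0"
  obtains W where "mat_tendsto (\<lambda>t. minv (V |\<^sub>m (i,i) \<mapsto> t)) W at_top" "W \<in> carrier_mat n n"
    "\<And>p. p < n \<Longrightarrow> W $$ (p,i) = 0" "\<And>q. q < n \<Longrightarrow> W $$ (i,q) = 0"
    "mat_delete W i i = minv (mat_delete V i i)"
proof -
  define W where "W = mat n n (\<lambda>pq. Lim at_top (\<lambda>t. minv (V |\<^sub>m (i,i) \<mapsto> t) $$ pq))"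
  have W: "W \<in> carrier_mat n n"
    by (simp add: W_def)
  have entry: "((\<lambda>t. minv (V |\<^sub>m (i,i) \<mapsto> t) $$ (p,q)) \<longlongrightarrow> W $$ (p,q)) at_top \<and> (p = i \<or> q = i \<longrightarrow> W $$ (p,q) = 0)"
    if pq: "p < n" "q < n" for p q
  proof -
    obtain w where w: "((\<lambda>t. minv (V |\<^sub>m (i,i) \<mapsto> t) $$ (p,q)) \<longlongrightarrow> w) at_top" "p = i \<or> q = i \<longrightarrow> w = 0"
      using tendsto_index_minv_update_diag[OF V i D pq] by blast
    moreover have "W $$ (p,q) = w"
      using pq tendsto_Lim[OF trivial_limit_at_top_linorder w(1)] by (simp add: W_def)
    ultimately show ?thesis
      by simp
  qed
  then have W_zero: "W $$ (p,i) = 0" "W $$ (i,p) = 0" if "p < n" for p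
    using that i by auto
  have "V |\<^sub>m (i,i) \<mapsto> t \<in> carrier_mat n n" for t
    using V by auto
  then have "\<forall>\<^sub>F t in at_top. minv (V |\<^sub>m (i,i) \<mapsto> t) \<in> carrier_mat n n"
    using eventually_det_update_diag_ne_zero[OF V i D] by (auto elim!: eventually_mono intro: minv_inverse(1))
  then have lim: "mat_tendsto (\<lambda>t. minv (V |\<^sub>m (i,i) \<mapsto> t)) W at_top"
    using W entry unfolding mat_tendsto_def by auto
  show thesis
    using that[OF lim W W_zero mat_delete_lim_minv_update_diag[OF V i D lim W]] W_zero by blast
qed

lemma set_diag_eq_update_mat: "set_diag V i t = V |\<^sub>m (i,i) \<mapsto> t"
  unfolding set_diag_def update_mat_def by (rule arg_cong[of _ _ "mat _ _"]) auto

theorem corollary2p3: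
  fixes F V :: "real mat" and n i :: nat
  assumes "F \<in> carrier_mat n n" and "V \<in> carrier_mat n n" and "i < n"
    and "det (mat_delete V i i) \<noteq> 0"
  shows "((\<lambda>t. rho (F * minv (set_diag V i t))) \<longlongrightarrow>
            rho (mat_delete F i i * minv (mat_delete V i i))) at_top"
proof -
  note F = assms(1) and V = assms(2) and i = assms(3)
  obtain W where lim: "mat_tendsto (\<lambda>t. minv (V |\<^sub>m (i,i) \<mapsto> t)) W at_top" and W: "W \<in> carrier_mat n n"
    and W_zero: "\<And>p. p < n \<Longrightarrow> W $$ (p,i) = 0" "\<And>q. q < n \<Longrightarrow> W $$ (i,q) = 0"
    and W_del: "mat_delete W i i = minv (mat_delete V i i)"
    using tendsto_minv_update_diag[OF V i assms(4)] by blast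
  have "mat_tendsto (\<lambda>t. F * minv (set_diag V i t)) (F * W) at_top"
    using mat_tendsto_mult[OF mat_tendsto_const lim] F W by (simp add: set_diag_eq_update_mat)
  then have "((\<lambda>t. rho (F * minv (set_diag V i t))) \<longlongrightarrow> rho (F * W)) at_top"
    using F W by (intro tendsto_rho[of _ _ _ n]) auto
  also have "rho (F * W) = rho (mat_delete (F * W) i i)"
    using F W W_zero i by (intro rho_mat_delete_zero_col[symmetric, of _ n]) (auto simp: scalar_prod_def)
  also have "mat_delete (F * W) i i = mat_delete F i i * minv (mat_delete V i i)"
    using F W W_zero i by (simp add: mat_delete_mult W_del)
  finally show ?thesis .
qed

end
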